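(* For every $n\ge 3$ the set $\Theta$ is non-empty; that is, flexible cross-polytopes of type $(n)$ (the simplest type) exist in the Lobachevsky space $\Lambda^n$.
   Context: Let $\Theta\subset\mathbb{R}^{n+\binom n2}$ be the set of pairs $(\boldsymbol{\lambda},G)$, where $\boldsymbol{\lambda}=(\lambda_1,\dots,\lambda_n)$ has nonzero real entries with $\lambda_p\ne\pm\lambda_q$ for $p\ne q$, and $G=(g_{pq})$ is a real symmetric $n\times n$ matrix with units on the diagonal, such that, with $H=(h_{pq})$ defined by $h_{pp}=1$ and $h_{pq}=\frac{2\lambda_p(\lambda_pg_{pq}-\lambda_q)}{\lambda_p^2-\lambda_q^2}$ for $p\ne q$, the following hold: (i) $G$ is non-degenerate indefinite with negative index of inertia $1$, and all principal minors of $G$ of sizes $2\times2,\dots,(n-1)\times(n-1)$ are strictly positive; (ii) $\sum_{q=1}^n\sum_{r=1}^n g^{qr}h_{pq}h_{pr}<0$ for $p=1,\dots,n$, where $(g^{qr})=G^{-1}$. These are exactly the pairs for which the flexible cross-polytope in $\Lambda^n$ with tangents of half dihedral angles at a fixed facet $t_p(x)=\lambda_p x$ is well defined (with vertices $\mathbf{a}_p=a_p\mathbf{c}_p$ and $\mathbf{b}_p(x)=b_p\big(\sum_q h_{pq}\mathbf{c}_q-\frac{2\lambda_p^2x^2}{\lambda_p^2x^2+1}\mathbf{n}_p+\frac{2\lambda_px}{\lambda_p^2x^2+1}\mathbf{m}\big)$, where $\mathbf{n}_p$ have Gram matrix $G$, $\mathbf{c}_p$ is the dual basis, $\mathbf{m}$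 is a unit vector orthogonal to all $\mathbf{n}_p$, and $a_p=\pm(-g^{pp})^{-1/2}$, $b_p=\pm(-\sum_{q,r}g^{qr}h_{pq}h_{pr})^{-1/2}$). *)

theory Defs
  imports "Jordan_Normal_Form.Determinant" "Jordan_Normal_Form.Char_Poly" "Jordan_Normal_Form.DL_Submatrix"
begin

(* Indices p, q range over {0..<n} (the paper's 1..n). *)

definition H_mat :: "nat \<Rightarrow> (nat \<Rightarrow> real) \<Rightarrow> real mat \<Rightarrow> real mat" where
  "H_mat n lam G = mat n n (\<lambda>(p,q). if p = q then 1
      else 2 * lam p * (lam p * G $$ (p,q) - lam q) / ((lam p)\<^sup>2 - (lam q)\<^sup>2))"

definition neg_inertia :: "real mat \<Rightarrow> nat" where
  "neg_inertia A = (\<Sum>x\<in>{x. x < 0 \<and> poly (char_poly A) x = 0}. order x (char_poly A))"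

definition pos_inertia :: "real mat \<Rightarrow> nat" where
  "pos_inertia A = (\<Sum>x\<in>{x. x > 0 \<and> poly (char_poly A) x = 0}. order x (char_poly A))"

definition in_Theta :: "nat \<Rightarrow> (nat \<Rightarrow> real) \<Rightarrow> real mat \<Rightarrow> bool" where
  "in_Theta n lam G \<longleftrightarrow>
     (\<forall>p<n. lam p \<noteq> 0) \<and>
     (\<forall>p<n. \<forall>q<n. p \<noteq> q \<longrightarrow> lam p \<noteq> lam q \<and> lam p \<noteq> - lam q) \<and>
     G \<in> carrier_mat n n \<and> G\<^sup>T = G \<and> (\<forall>p<n. G $$ (p,p) = 1) \<and>
     \<comment> \<open>(i)\<close>
     det G \<noteq> 0 \<and> pos_inertia G > 0 \<and> neg_inertia G = 1 \<and>
     (\<forall>S. S \<subseteq> {0..<n} \<longrightarrow> 2 \<le> card S \<longrightarrow> card S \<le> n - 1 \<longrightarrow> det (submatrix G S S) > 0) \<and>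
     \<comment> \<open>(ii), with Ginv = G^{-1}\<close>
     (\<exists>Ginv \<in> carrier_mat n n. G * Ginv = 1\<^sub>m n \<and> Ginv * G = 1\<^sub>m n \<and>
        (\<forall>p<n. (\<Sum>q<n. \<Sum>r<n. Ginv $$ (q,r) * H_mat n lam G $$ (p,q) * H_mat n lam G $$ (p,r)) < 0))"

definition Theta :: "nat \<Rightarrow> ((nat \<Rightarrow> real) \<times> real mat) set" where
  "Theta n = {(lam, G). in_Theta n lam G}"

end

theory Submission
  imports Defs
begin

(*
  G is the identity matrix whose last row and column have all other entries equal to g,
  where g^2 = 2/(2n-3). Its principal k x k minors are 1 or 1 - (k-1) g^2, positive for
  k <= n-1 and negative for k = n; its eigenvalues are 1 and 1 +- sqrt(n-1) g, exactly one
  of them negative; and G^-1 = diag(1,...,1,0) - (2n-3) u u^T with u = (g,...,g,-1).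
  Take lambda_n = 1 and let lambda_1, ..., lambda_(n-1) grow geometrically with ratio N.
  Up to errors 2/(N-1) in every entry, row p < n of H is e_p + 2g e_n and row n is e_n,
  where the quadratic form of G^-1 equals 1 - (2n-3) g^2 = -1 and -(2n-3) respectively;
  for N = 16n^2 + 1 the errors are too small to change these signs.
*)

section \<open>Arrow matrices\<close>

definition arrow_mat :: "real \<Rightarrow> real \<Rightarrow> nat \<Rightarrow> real mat" where
  "arrow_mat d w k = mat k k (\<lambda>(i,j). if i = j then d
      else if i = k - 1 \<or> j = k - 1 then w else 0)"

lemma arrow_mat_carrier [simp]: "arrow_mat d w k \<in> carrier_mat k k"
  and dim_row_arrow_mat [simp]: "dim_row (arrow_mat d w k) = k"
  and dim_col_arrow_mat [simp]: "dim_col (arrow_mat d w k) = k"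
  by (simp_all add: arrow_mat_def)

lemma transpose_arrow_mat [simp]: "(arrow_mat d w k)\<^sup>T = arrow_mat d w k"
  by (rule eq_matI) (auto simp: arrow_mat_def)

lemma sum_arrow_mat_column:
  assumes j: "j < Suc m"
  shows "(\<Sum>k<m. arrow_mat d w (Suc m) $$ (k,j)) = (if j = m then real m * w else d)"
proof (cases "j = m")
  case True
  then have "(\<Sum>k<m. arrow_mat d w (Suc m) $$ (k,j)) = (\<Sum>k<m. w)"
    by (intro sum.cong) (auto simp: arrow_mat_def)
  with True show ?thesis by simp
next
  case False
  with j have "(\<Sum>k<m. arrow_mat d w (Suc m) $$ (k,j)) = (\<Sum>k<m. if k = j then d else 0)"
    by (intro sum.cong) (auto simp: arrow_mat_def)
  with False j show ?thesis by simp
qed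

text \<open>Subtracting \<open>w/d\<close> times each of the first \<open>m\<close> rows from the last one
  makes the matrix upper triangular.\<close>

lemma det_arrow_mat:
  assumes d: "d \<noteq> 0"
  shows "det (arrow_mat d w (Suc m)) = d ^ m * (d - real m * w\<^sup>2 / d)"
proof -
  let ?A = "arrow_mat d w (Suc m)"
  define L where "L = mat (Suc m) (Suc m) (\<lambda>(i,j). if i = j then 1 else if i = m then - w / d else 0)"
  have L: "L \<in> carrier_mat (Suc m) (Suc m)" by (simp add: L_def)
  have LA: "(L * ?A) $$ (i,j) =
      (if i = m then ?A $$ (m,j) - w / d * (\<Sum>k<m. ?A $$ (k,j)) else ?A $$ (i,j))"
    if i: "i < Suc m" and j: "j < Suc m" for i j
  proof -
    have "(L * ?A) $$ (i,j) = (\<Sum>k<m. L $$ (i,k) * ?A $$ (k,j)) + L $$ (i,m) * ?A $$ (m,j)"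
      using i j by (simp add: L_def scalar_prod_def atLeast0LessThan)
    also have "\<dots> = (if i = m then ?A $$ (m,j) - w / d * (\<Sum>k<m. ?A $$ (k,j)) else ?A $$ (i,j))"
    proof (cases "i = m")
      case True
      then show ?thesis by (simp add: L_def sum_distrib_left sum_negf)
    next
      case False
      then have "(\<Sum>k<m. L $$ (i,k) * ?A $$ (k,j)) = ?A $$ (i,j)"
        using i by (simp add: L_def if_distrib[of "\<lambda>x. x * _"] cong: if_cong)
      with False i show ?thesis by (simp add: L_def)
    qed
    finally show ?thesis .
  qed
  have ut: "upper_triangular (L * ?A)"
    unfolding upper_triangular_def
  proof (intro allI impI)
    fix i j assume "i < dim_row (L * ?A)" "j < i"
    then have "i < Suc m" "j < m" "i \<noteq> j" by (auto simp: L_def)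
    then show "(L * ?A) $$ (i,j) = 0"
      using LA[of i j] sum_arrow_mat_column[of j m d w] d by (simp add: arrow_mat_def)
  qed
  have "det (L * ?A) = (\<Prod>i<Suc m. (L * ?A) $$ (i,i))"
  proof -
    have LA_carrier: "L * ?A \<in> carrier_mat (Suc m) (Suc m)" using L by simp
    then show ?thesis
      unfolding det_upper_triangular[OF ut LA_carrier] prod_list_diag_prod
      by (simp add: atLeast0LessThan del: index_mult_mat prod.lessThan_Suc)
  qed
  also have "\<dots> = d ^ m * (d - real m * w\<^sup>2 / d)"
    using LA sum_arrow_mat_column by (simp add: arrow_mat_def power2_eq_square)
  finally have "det (L * ?A) = d ^ m * (d - real m * w\<^sup>2 / d)" .
  moreover have "det L = 1"
    using det_lower_triangular[OF _ L] by (simp add: L_def prod_list_diag_prod)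
  ultimately show ?thesis
    using det_mult[OF L arrow_mat_carrier] by simp
qed

lemma det_arrow_mat_one:
  assumes "k > 0"
  shows "det (arrow_mat 1 w k) = 1 - real (k - 1) * w\<^sup>2"
  using det_arrow_mat[of 1 w "k - 1"] assms by simp

lemma submatrix_arrow_mat:
  assumes S: "S \<subseteq> {0..<n}"
  shows "submatrix (arrow_mat d w n) S S = arrow_mat d (if n - 1 \<in> S then w else 0) (card S)"
proof -
  have S_eq: "{i. i < n \<and> i \<in> S} = S" using S by auto
  have pick: "pick S i < n" "pick S i \<in> S" if "i < card S" for i
    using pick_in_set[of i S] that S by auto
  have pick_inj: "pick S i = pick S j \<longleftrightarrow> i = j" if "i < card S" "j < card S" for i j
    using pick_mono[of j S i] pick_mono[of i S j] that by (metis nat_neq_iff less_irrefl)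
  have pick_last: "pick S i = n - 1 \<longleftrightarrow> n - 1 \<in> S \<and> i = card S - 1" if i: "i < card S" for i
  proof -
    have "finite S" using S finite_subset by blast
    moreover have "{a\<in>S. a < n - 1} = S - {n - 1}" using S by auto
    ultimately have "n - 1 \<in> S \<Longrightarrow> card {a\<in>S. a < n - 1} = card S - 1" by simp
    then show ?thesis
      using card_pick[of i S] i pick_card_in_set[of "n - 1" S] pick(2)[OF i] by auto
  qed
  show ?thesis
  proof (rule eq_matI)
    fix i j assume "i < dim_row (arrow_mat d (if n - 1 \<in> S then w else 0) (card S))"
      and "j < dim_col (arrow_mat d (if n - 1 \<in> S then w else 0) (card S))"
    then have i: "i < card S" and j: "j < card S" by auto
    have "submatrix (arrow_mat d w n) S S $$ (i,j) = arrow_mat d w n $$ (pick S i, pick S j)"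
      by (rule submatrix_index) (use S_eq i j in auto)
    also have "\<dots> = arrow_mat d (if n - 1 \<in> S then w else 0) (card S) $$ (i,j)"
      using pick[OF i] pick[OF j] pick_inj[OF i j] pick_last[OF i] pick_last[OF j] i j
      by (auto simp: arrow_mat_def)
    finally show "submatrix (arrow_mat d w n) S S $$ (i,j)
      = arrow_mat d (if n - 1 \<in> S then w else 0) (card S) $$ (i,j)" .
  qed (use S_eq in \<open>auto simp: submatrix_def\<close>)
qed

text \<open>Both sides agree at every \<open>x \<noteq> 1\<close> by the determinant formula, hence everywhere.\<close>

lemma char_poly_arrow_mat:
  assumes n: "n \<ge> 2" and r: "r\<^sup>2 = real (n - 1) * w\<^sup>2"
  shows "char_poly (arrow_mat 1 w n) = [:-1,1:] ^ (n - 2) * ([:-(1 + r),1:] * [:-(1 - r),1:])"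
    (is "?c = ?P")
proof -
  have agree: "poly ?c x = poly ?P x" if x: "x \<noteq> 1" for x
  proof -
    have "poly ?c x = det (- char_matrix (arrow_mat 1 w n) x)"
      by (rule char_poly_matrix[OF arrow_mat_carrier])
    also have "- char_matrix (arrow_mat 1 w n) x = arrow_mat (x - 1) (- w) (Suc (n - 1))"
      by (rule eq_matI) (use n in \<open>auto simp: arrow_mat_def char_matrix_def\<close>)
    also have "det \<dots> = (x - 1) ^ (n - 1) * ((x - 1) - real (n - 1) * (- w)\<^sup>2 / (x - 1))"
      by (rule det_arrow_mat) (use x in simp)
    also have "\<dots> = (x - 1) ^ (n - 2) * ((x - 1)\<^sup>2 - r\<^sup>2)"
    proof -
      have n_pred: "n - 1 = Suc (n - 2)" using n by simp
      show ?thesis using x unfolding n_pred r by (simp add: field_simps power2_eq_square)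
    qed
    also have "\<dots> = poly ?P x" by (simp add: algebra_simps power2_eq_square)
    finally show ?thesis .
  qed
  show ?thesis
  proof (rule ccontr)
    assume "?c \<noteq> ?P"
    then have "finite {x. poly (?c - ?P) x = 0}" by (intro poly_roots_finite) simp
    moreover have "UNIV - {1} \<subseteq> {x. poly (?c - ?P) x = 0}" using agree by auto
    ultimately have "finite (UNIV - {1::real})" by (rule finite_subset[rotated])
    then show False using infinite_UNIV_char_0[where 'a=real] by simp
  qed
qed

lemma inertia_arrow_mat:
  assumes n: "n \<ge> 2" and w: "real (n - 1) * w\<^sup>2 > 1"
  shows "neg_inertia (arrow_mat 1 w n) = 1" and "pos_inertia (arrow_mat 1 w n) > 0"
proof -
  define r where "r = sqrt (real (n - 1) * w\<^sup>2)"
  have r1: "r > 1" unfolding r_def by (rule real_less_rsqrt) (use w n in \<open>simp add: of_nat_diff\<close>)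
  define P where "P = [:-1,1:] ^ (n - 2) * ([:-(1 + r),1:] * [:-(1 - r),1::real:])"
  have char: "char_poly (arrow_mat 1 w n) = P"
    unfolding P_def by (rule char_poly_arrow_mat) (use n w in \<open>auto simp: r_def\<close>)
  have P0: "P \<noteq> 0" unfolding P_def by (metis mult_eq_0_iff power_eq_0_iff pCons_eq_0_iff one_neq_zero)
  have linear: "poly [:-a,1:] x = x - a" for a x :: real by simp
  have poly_P: "poly P x = (x - 1) ^ (n - 2) * ((x - (1 + r)) * (x - (1 - r)))" for x
    by (simp only: P_def poly_mult poly_power linear)
  have "{x. x < 0 \<and> poly P x = 0} = {1 - r}" using r1 by (auto simp: poly_P)
  moreover have "order (1 - r) P = 1"
  proof -
    have "order (1 - r) P = order (1 - r) ([:-1,1:] ^ (n - 2) * [:-(1 + r),1:]) + order (1 - r) [:-(1 - r),1:]"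
      using P0 unfolding P_def mult.assoc[symmetric] by (rule order_mult)
    moreover have "order (1 - r) ([:-1,1:] ^ (n - 2) * [:-(1 + r),1:]) = 0"
      using r1 by (intro order_0I) (simp only: poly_mult poly_power linear, simp)
    moreover have "order (1 - r) [:-(1 - r),1:] = 1" using order_power_n_n[of "1 - r" 1] by simp
    ultimately show ?thesis by simp
  qed
  ultimately show "neg_inertia (arrow_mat 1 w n) = 1" by (simp add: neg_inertia_def char)
  have pos_roots: "1 + r \<in> {x. x > 0 \<and> poly P x = 0}" using r1 by (simp add: poly_P)
  have "0 < order (1 + r) P" using P0 pos_roots order_root[of P "1 + r"] by auto
  also have "\<dots> \<le> (\<Sum>x\<in>{x. x > 0 \<and> poly P x = 0}. order x P)"
    using poly_roots_finite[OF P0] by (intro member_le_sum[OF pos_roots]) (auto elim: rev_finite_subset)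
  finally show "pos_inertia (arrow_mat 1 w n) > 0" by (simp add: pos_inertia_def char)
qed

definition arrow_inv_mat :: "real \<Rightarrow> nat \<Rightarrow> real mat" where
  "arrow_inv_mat w n = (let u = (\<lambda>q. if q = n - 1 then -1 else w) in
     mat n n (\<lambda>(q,r). (if q = r \<and> q < n - 1 then 1 else 0) + u q * u r / (1 - real (n - 1) * w\<^sup>2)))"

lemma arrow_mat_mult_arrow_inv_mat:
  assumes w: "real m * w\<^sup>2 \<noteq> 1"
  shows "arrow_mat 1 w (Suc m) * arrow_inv_mat w (Suc m) = 1\<^sub>m (Suc m)"
proof (rule eq_matI)
  define \<delta> where "\<delta> = 1 - real m * w\<^sup>2"
  define u where "u = (\<lambda>q. if q = m then -1 else w)"
  let ?A = "arrow_mat 1 w (Suc m)" and ?B = "arrow_inv_mat w (Suc m)"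
  have \<delta>: "\<delta> \<noteq> 0" using w by (simp add: \<delta>_def)
  have B: "?B $$ (q,r) = (if q = r \<and> q < m then 1 else 0) + u q * u r / \<delta>"
    if "q < Suc m" "r < Suc m" for q r
    using that by (simp add: arrow_inv_mat_def Let_def u_def \<delta>_def)
  fix i j assume "i < dim_row (1\<^sub>m (Suc m))" "j < dim_col (1\<^sub>m (Suc m))"
  then have i: "i < Suc m" and j: "j < Suc m" by auto
  have "(?A * ?B) $$ (i,j) = (\<Sum>k<m. ?A $$ (i,k) * ?B $$ (k,j)) + ?A $$ (i,m) * ?B $$ (m,j)"
    using i j by (simp add: arrow_inv_mat_def scalar_prod_def atLeast0LessThan)
  also have "\<dots> = 1\<^sub>m (Suc m) $$ (i,j)"
  proof (cases "i = m")
    case True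
    have "(\<Sum>k<m. ?A $$ (i,k) * ?B $$ (k,j)) = (\<Sum>k<m. (if k = j then w else 0) + w * w * u j / \<delta>)"
      using True j by (intro sum.cong) (auto simp: B arrow_mat_def u_def distrib_left)
    also have "\<dots> = (if j < m then w else 0) + real m * w\<^sup>2 * u j / \<delta>"
      by (simp add: sum.distrib power2_eq_square)
    moreover have "?A $$ (i,m) * ?B $$ (m,j) = - u j / \<delta>"
      using True j by (simp add: B arrow_mat_def u_def)
    moreover have "(if j < m then w else 0) + real m * w\<^sup>2 * u j / \<delta> - u j / \<delta> = 1\<^sub>m (Suc m) $$ (i,j)"
      using True j \<delta> by (cases "j = m") (simp_all add: u_def \<delta>_def field_simps)
    ultimately show ?thesis by linarith
  next
    case False
    with i have "i < m" by simp
    then have "(\<Sum>k<m. ?A $$ (i,k) * ?B $$ (k,j)) = (\<Sum>k<m. if k = i then ?B $$ (i,j) else 0)"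
      by (intro sum.cong) (auto simp: arrow_mat_def)
    with \<open>i < m\<close> show ?thesis
      using i j by (simp add: B arrow_mat_def u_def)
  qed
  finally show "(?A * ?B) $$ (i,j) = 1\<^sub>m (Suc m) $$ (i,j)" .
qed (auto simp: arrow_inv_mat_def)

lemma arrow_inv_mat_mult_arrow_mat:
  assumes "real m * w\<^sup>2 \<noteq> 1"
  shows "arrow_inv_mat w (Suc m) * arrow_mat 1 w (Suc m) = 1\<^sub>m (Suc m)"
  by (rule mat_mult_left_right_inverse[OF arrow_mat_carrier _ arrow_mat_mult_arrow_inv_mat[OF assms]])
    (simp add: arrow_inv_mat_def)

lemma arrow_inv_mat_quadratic_form:
  fixes h :: "nat \<Rightarrow> real"
  shows "(\<Sum>q<Suc m. \<Sum>r<Suc m. arrow_inv_mat w (Suc m) $$ (q,r) * h q * h r)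
    = (\<Sum>q<m. (h q)\<^sup>2) + (w * (\<Sum>q<m. h q) - h m)\<^sup>2 / (1 - real m * w\<^sup>2)"
proof -
  define \<delta> where "\<delta> = 1 - real m * w\<^sup>2"
  define v where "v = (\<lambda>q. (if q = m then -1 else w) * h q)"
  have "(\<Sum>q<Suc m. \<Sum>r<Suc m. arrow_inv_mat w (Suc m) $$ (q,r) * h q * h r)
      = (\<Sum>q<Suc m. \<Sum>r<Suc m. (if r = q then if q < m then (h q)\<^sup>2 else 0 else 0) + v q * v r / \<delta>)"
    by (intro sum.cong refl)
      (auto simp: arrow_inv_mat_def Let_def v_def \<delta>_def power2_eq_square field_simps)
  also have "\<dots> = (\<Sum>q<Suc m. if q < m then (h q)\<^sup>2 else 0) + (\<Sum>q<Suc m. \<Sum>r<Suc m. v q * v r) / \<delta>"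
    by (simp add: sum.distrib sum_divide_distrib del: sum.lessThan_Suc)
  also have "\<dots> = (\<Sum>q<m. (h q)\<^sup>2) + (\<Sum>q<Suc m. v q)\<^sup>2 / \<delta>"
    unfolding power2_eq_square sum_product by simp
  also have "(\<Sum>q<Suc m. v q) = w * (\<Sum>q<m. h q) - h m"
    by (simp add: v_def sum_distrib_left)
  finally show ?thesis by (simp add: \<delta>_def)
qed

section \<open>Perturbations of the limiting rows\<close>

lemma abs_sum_le_of_abs_le:
  fixes f :: "nat \<Rightarrow> real"
  assumes "\<And>q. q < m \<Longrightarrow> \<bar>f q\<bar> \<le> e"
  shows "\<bar>\<Sum>q<m. f q\<bar> \<le> real m * e"
proof -
  have "\<bar>\<Sum>q<m. f q\<bar> \<le> (\<Sum>q<m. \<bar>f q\<bar>)" by (rule sum_abs)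
  also have "\<dots> \<le> (\<Sum>q<m. e)" using assms by (intro sum_mono) auto
  finally show ?thesis by simp
qed

lemma arrow_form_neg_near_inner_row:
  fixes x :: "nat \<Rightarrow> real"
  assumes p: "p < m" and xp: "x p = 1"
    and xq: "\<And>q. q < m \<Longrightarrow> q \<noteq> p \<Longrightarrow> \<bar>x q\<bar> \<le> e"
    and xm: "\<bar>x m - 2 * w\<bar> \<le> e"
    and w: "0 \<le> w" "w \<le> 1" and c: "c * w\<^sup>2 = 2"
    and e: "0 \<le> e" "real m * e\<^sup>2 + 2 * c * real (Suc m) * e < 1"
  shows "(\<Sum>q<m. (x q)\<^sup>2) - c * (w * (\<Sum>q<m. x q) - x m)\<^sup>2 < 0"
proof -
  have c_pos: "0 < c" using c zero_le_power2[of w] by (smt (verit) mult_nonpos_nonneg)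
  have "(\<Sum>q<m. (x q)\<^sup>2) \<le> (\<Sum>q<m. (if q = p then 1 else 0) + e\<^sup>2)"
  proof (rule sum_mono)
    fix q assume "q \<in> {..<m}"
    moreover have "\<bar>x q\<bar> \<le> \<bar>e\<bar> \<Longrightarrow> (x q)\<^sup>2 \<le> e\<^sup>2" by (simp only: abs_le_square_iff)
    ultimately show "(x q)\<^sup>2 \<le> (if q = p then 1 else 0) + e\<^sup>2"
      using xp xq[of q] e(1) by auto
  qed
  then have sum_sq: "(\<Sum>q<m. (x q)\<^sup>2) \<le> 1 + real m * e\<^sup>2"
    using p by (simp add: sum.distrib)
  have "\<bar>\<Sum>q<m. x q - (if q = p then 1 else 0)\<bar> \<le> real m * e"
    by (rule abs_sum_le_of_abs_le) (use xq xp e(1) in auto)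
  then have sum: "\<bar>(\<Sum>q<m. x q) - 1\<bar> \<le> real m * e"
    using p by (simp add: sum_subtractf)
  define d where "d = w * ((\<Sum>q<m. x q) - 1) - (x m - 2 * w)"
  have "\<bar>w * ((\<Sum>q<m. x q) - 1)\<bar> \<le> \<bar>(\<Sum>q<m. x q) - 1\<bar>"
    using w by (simp add: abs_mult mult_left_le_one_le)
  then have "\<bar>d\<bar> \<le> real (Suc m) * e"
    unfolding d_def using sum xm abs_triangle_ineq4[of "w * ((\<Sum>q<m. x q) - 1)" "x m - 2 * w"]
    by (simp add: algebra_simps)
  moreover have "w * d \<le> \<bar>d\<bar>"
    using w mult_left_mono[OF abs_ge_self[of d] w(1)] mult_left_le_one_le[of "\<bar>d\<bar>" w] by simp
  moreover have "(w * (\<Sum>q<m. x q) - x m)\<^sup>2 = d\<^sup>2 - 2 * w * d + w\<^sup>2"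
    by (simp add: d_def power2_eq_square algebra_simps)
  ultimately have "w\<^sup>2 - 2 * (real (Suc m) * e) \<le> (w * (\<Sum>q<m. x q) - x m)\<^sup>2"
    using zero_le_power2[of d] by linarith
  then have "c * (w\<^sup>2 - 2 * (real (Suc m) * e)) \<le> c * (w * (\<Sum>q<m. x q) - x m)\<^sup>2"
    using c_pos by (intro mult_left_mono) auto
  then have "2 - 2 * c * real (Suc m) * e \<le> c * (w * (\<Sum>q<m. x q) - x m)\<^sup>2"
    using c by (simp add: algebra_simps)
  then show ?thesis using sum_sq e(2) by linarith
qed

lemma arrow_form_neg_near_last_row:
  fixes x :: "nat \<Rightarrow> real"
  assumes xq: "\<And>q. q < m \<Longrightarrow> \<bar>x q\<bar> \<le> e" and xm: "x m = 1"
    and w: "0 \<le> w" "w \<le> 1" and c: "c > 0"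
    and e: "0 \<le> e" "real m * e\<^sup>2 + 2 * c * real m * e < c"
  shows "(\<Sum>q<m. (x q)\<^sup>2) - c * (w * (\<Sum>q<m. x q) - x m)\<^sup>2 < 0"
proof -
  have "(\<Sum>q<m. (x q)\<^sup>2) \<le> (\<Sum>q<m. e\<^sup>2)"
  proof (rule sum_mono)
    fix q assume "q \<in> {..<m}"
    moreover have "\<bar>x q\<bar> \<le> \<bar>e\<bar> \<Longrightarrow> (x q)\<^sup>2 \<le> e\<^sup>2" by (simp only: abs_le_square_iff)
    ultimately show "(x q)\<^sup>2 \<le> e\<^sup>2" using xq[of q] e(1) by auto
  qed
  then have sum_sq: "(\<Sum>q<m. (x q)\<^sup>2) \<le> real m * e\<^sup>2" by simp
  define d where "d = w * (\<Sum>q<m. x q)"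
  have "\<bar>\<Sum>q<m. x q\<bar> \<le> real m * e" by (rule abs_sum_le_of_abs_le) (use xq in auto)
  moreover have "\<bar>d\<bar> \<le> \<bar>\<Sum>q<m. x q\<bar>"
    using w by (simp add: d_def abs_mult mult_left_le_one_le)
  moreover have "(d - 1)\<^sup>2 = d\<^sup>2 - 2 * d + 1" by (simp add: power2_eq_square algebra_simps)
  ultimately have "1 - 2 * (real m * e) \<le> (d - 1)\<^sup>2"
    using zero_le_power2[of d] abs_ge_self[of d] by linarith
  then have "c * (1 - 2 * (real m * e)) \<le> c * (d - 1)\<^sup>2"
    using c by (intro mult_left_mono) auto
  then show ?thesis using sum_sq e(2) unfolding xm d_def[symmetric] by (simp add: algebra_simps)
qed

lemma abs_two_mult_div_diff_squares_le:
  fixes a b N :: real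
  assumes a: "0 < a" and b: "0 < b" and N: "1 < N" and sep: "N * a \<le> b \<or> N * b \<le> a"
  shows "\<bar>2 * a * b / (a\<^sup>2 - b\<^sup>2)\<bar> \<le> 2 / (N - 1)"
proof -
  have "(N - 1) * (a * b) \<le> \<bar>a\<^sup>2 - b\<^sup>2\<bar>"
    using sep
  proof
    assume Nab: "N * a \<le> b"
    moreover have "a \<le> N * a" using a N by simp
    ultimately have "0 \<le> b - N * a" "0 \<le> b - a" by linarith+
    then have "0 \<le> b * (b - N * a)" "0 \<le> a * (b - a)" using a b by simp_all
    moreover have "b\<^sup>2 - a\<^sup>2 - (N - 1) * (a * b) = b * (b - N * a) + a * (b - a)"
      by (simp add: power2_eq_square algebra_simps)
    ultimately show ?thesis using abs_ge_minus_self[of "a\<^sup>2 - b\<^sup>2"] by linarith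
  next
    assume Nba: "N * b \<le> a"
    moreover have "b \<le> N * b" using b N by simp
    ultimately have "0 \<le> a - N * b" "0 \<le> a - b" by linarith+
    then have "0 \<le> a * (a - N * b)" "0 \<le> b * (a - b)" using a b by simp_all
    moreover have "a\<^sup>2 - b\<^sup>2 - (N - 1) * (a * b) = a * (a - N * b) + b * (a - b)"
      by (simp add: power2_eq_square algebra_simps)
    ultimately show ?thesis using abs_ge_self[of "a\<^sup>2 - b\<^sup>2"] by linarith
  qed
  then show ?thesis
    using a b N by (simp add: abs_mult divide_simps abs_divide) (simp add: algebra_simps)
qed

lemma abs_two_diff_div_square_sub_one_le:
  fixes L N w :: real
  assumes N: "1 < N" and L: "N \<le> L" and w: "0 \<le> w" "w \<le> 1"
  shows "\<bar>2 * (w - L) / (L\<^sup>2 - 1)\<bar> \<le> 2 / (N - 1)"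
proof -
  have L1: "1 < L" using N L by simp
  then have pos: "0 < L\<^sup>2 - 1" by (simp add: power2_eq_square) (smt (verit) mult_less_cancel_left1)
  have "(L - w) * (N - 1) \<le> L * (L - 1)" using w L N L1 by (intro mult_mono) auto
  also have "\<dots> \<le> L\<^sup>2 - 1" using L1 by (simp add: power2_eq_square algebra_simps)
  finally have "(L - w) * (N - 1) \<le> L\<^sup>2 - 1" .
  then show ?thesis
    using pos N w L1 by (simp add: abs_div divide_simps) (simp add: algebra_simps)
qed

section \<open>The witness\<close>

definition witness_weight :: "nat \<Rightarrow> real" where
  "witness_weight n = sqrt (2 / (2 * real n - 3))"

definition witness_ratio :: "nat \<Rightarrow> real" where
  "witness_ratio n = 16 * (real n)\<^sup>2 + 1"

definition witness_lam :: "nat \<Rightarrow> nat \<Rightarrow> real" where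
  "witness_lam n q = (if q = n - 1 then 1 else witness_ratio n ^ Suc q)"

definition witness_gram :: "nat \<Rightarrow> real mat" where
  "witness_gram n = arrow_mat 1 (witness_weight n) n"

context
  fixes n :: nat
  assumes n: "3 \<le> n"
begin

lemma witness_weight_sq: "(witness_weight n)\<^sup>2 = 2 / (2 * real n - 3)"
  using n by (simp add: witness_weight_def)

lemma witness_weight_bounds: "0 \<le> witness_weight n" "witness_weight n \<le> 1"
  using n by (simp_all add: witness_weight_def)

lemma witness_ratio_gt_one: "1 < witness_ratio n"
  using n by (simp add: witness_ratio_def)

lemma witness_lam_pos: "0 < witness_lam n q"
  using witness_ratio_gt_one by (simp add: witness_lam_def)

lemma witness_lam_ge_ratio:
  assumes "q < n - 1"
  shows "witness_ratio n \<le> witness_lam n q"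
  using assms witness_ratio_gt_one by (simp add: witness_lam_def)

lemma witness_lam_sq_gt_one:
  assumes "q < n - 1"
  shows "1 < (witness_lam n q)\<^sup>2"
  using less_le_trans[OF witness_ratio_gt_one witness_lam_ge_ratio[OF assms]]
  by (simp add: one_less_power)

lemma witness_lam_separated:
  assumes p: "p < n" and q: "q < n" and pq: "p \<noteq> q"
  shows "witness_ratio n * witness_lam n p \<le> witness_lam n q
    \<or> witness_ratio n * witness_lam n q \<le> witness_lam n p"
proof -
  let ?N = "witness_ratio n"
  have pow: "?N * ?N ^ Suc i \<le> ?N ^ Suc j" if "i < j" for i j
    using that witness_ratio_gt_one by (simp del: power_Suc add: power_Suc[symmetric] power_increasing)
  show ?thesis
  proof (cases "p = n - 1 \<or> q = n - 1")
    case True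
    then show ?thesis
      using witness_lam_ge_ratio[of p] witness_lam_ge_ratio[of q] p q pq
      by (auto simp: witness_lam_def)
  next
    case False
    then show ?thesis
      using pow[of p q] pow[of q p] pq by (auto simp: witness_lam_def nat_neq_iff)
  qed
qed

lemma witness_lam_distinct:
  assumes "p < n" "q < n" "p \<noteq> q"
  shows "witness_lam n p \<noteq> witness_lam n q \<and> witness_lam n p \<noteq> - witness_lam n q"
proof -
  have "witness_lam n r < witness_ratio n * witness_lam n r" for r
    using witness_lam_pos[of r] witness_ratio_gt_one by simp
  then show ?thesis
    using witness_lam_separated[OF assms] witness_lam_pos[of p] witness_lam_pos[of q]
    by (smt (verit))
qed

lemma det_witness_gram: "det (witness_gram n) = - 1 / (2 * real n - 3)"
proof -
  have "real (n - 1) = real n - 1" "2 * real n - 3 > 0" using n by auto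
  then show ?thesis
    using n by (simp add: witness_gram_def det_arrow_mat_one witness_weight_sq field_simps)
qed

lemma witness_gram_inertia:
  shows "neg_inertia (witness_gram n) = 1" and "0 < pos_inertia (witness_gram n)"
proof -
  have "real (n - 1) = real n - 1" "2 * real n - 3 > 0" using n by auto
  then have "1 < real (n - 1) * (witness_weight n)\<^sup>2"
    by (simp add: witness_weight_sq field_simps)
  then show "neg_inertia (witness_gram n) = 1" "0 < pos_inertia (witness_gram n)"
    using inertia_arrow_mat[of n] n by (simp_all add: witness_gram_def)
qed

lemma witness_gram_minors_pos:
  assumes S: "S \<subseteq> {0..<n}" "2 \<le> card S" "card S \<le> n - 1"
  shows "0 < det (submatrix (witness_gram n) S S)"
proof -
  have "real (card S - 1) = real (card S) - 1" "real (card S) \<le> real n - 1" "2 * real n - 3 > 0"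
    using S n by auto
  then have "real (card S - 1) * (witness_weight n)\<^sup>2 < 1"
    by (simp add: witness_weight_sq field_simps)
  then show ?thesis
    using S by (simp add: witness_gram_def submatrix_arrow_mat det_arrow_mat_one)
qed

lemma witness_gram_inverse:
  shows "witness_gram n * arrow_inv_mat (witness_weight n) n = 1\<^sub>m n"
    and "arrow_inv_mat (witness_weight n) n * witness_gram n = 1\<^sub>m n"
proof -
  define m where "m = n - 1"
  have n_eq: "n = Suc m" using n by (simp add: m_def)
  have "real m = real n - 1" "2 * real n - 3 > 0" using n_eq n by auto
  then have "real m * (witness_weight n)\<^sup>2 \<noteq> 1"
    by (simp add: witness_weight_sq field_simps)
  from arrow_mat_mult_arrow_inv_mat[OF this] arrow_inv_mat_mult_arrow_mat[OF this]
  show "witness_gram n * arrow_inv_mat (witness_weight n) n = 1\<^sub>m n"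
    "arrow_inv_mat (witness_weight n) n * witness_gram n = 1\<^sub>m n"
    unfolding witness_gram_def n_eq[symmetric] .
qed

lemma witness_H_entry:
  assumes "p < n" "q < n" "p \<noteq> q"
  shows "H_mat n (witness_lam n) (witness_gram n) $$ (p,q) =
    2 * witness_lam n p * (witness_lam n p * (if p = n - 1 \<or> q = n - 1 then witness_weight n else 0)
      - witness_lam n q) / ((witness_lam n p)\<^sup>2 - (witness_lam n q)\<^sup>2)"
  using assms by (simp add: H_mat_def witness_gram_def arrow_mat_def)

lemma witness_H_inner_row:
  assumes p: "p < n - 1"
  defines "h \<equiv> \<lambda>q. H_mat n (witness_lam n) (witness_gram n) $$ (p,q)"
  shows "h p = 1"
    and "\<And>q. q < n - 1 \<Longrightarrow> q \<noteq> p \<Longrightarrow> \<bar>h q\<bar> \<le> 2 / (witness_ratio n - 1)"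
    and "\<bar>h (n - 1) - 2 * witness_weight n\<bar> \<le> 2 / (witness_ratio n - 1)"
proof -
  let ?g = "witness_weight n" and ?L = "witness_lam n p"
  show "h p = 1" using p by (simp add: h_def H_mat_def)
  show "\<bar>h q\<bar> \<le> 2 / (witness_ratio n - 1)" if q: "q < n - 1" "q \<noteq> p" for q
  proof -
    have "h q = - (2 * ?L * witness_lam n q / (?L\<^sup>2 - (witness_lam n q)\<^sup>2))"
      using p q by (simp add: h_def witness_H_entry)
    then show ?thesis
      using abs_two_mult_div_diff_squares_le[OF witness_lam_pos witness_lam_pos witness_ratio_gt_one
          witness_lam_separated] p q by simp
  qed
  have "?L\<^sup>2 \<noteq> 1" using witness_lam_sq_gt_one[OF p] by simp
  then have "h (n - 1) - 2 * ?g = 2 * (?g - ?L) / (?L\<^sup>2 - 1)"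
    using p by (simp add: h_def witness_H_entry witness_lam_def field_simps power2_eq_square)
  then show "\<bar>h (n - 1) - 2 * ?g\<bar> \<le> 2 / (witness_ratio n - 1)"
    using abs_two_diff_div_square_sub_one_le[OF witness_ratio_gt_one witness_lam_ge_ratio[OF p]
        witness_weight_bounds] by simp
qed

lemma witness_H_last_row:
  defines "h \<equiv> \<lambda>q. H_mat n (witness_lam n) (witness_gram n) $$ (n - 1, q)"
  shows "h (n - 1) = 1"
    and "\<And>q. q < n - 1 \<Longrightarrow> \<bar>h q\<bar> \<le> 2 / (witness_ratio n - 1)"
proof -
  show "h (n - 1) = 1" using n by (simp add: h_def H_mat_def)
  show "\<bar>h q\<bar> \<le> 2 / (witness_ratio n - 1)" if q: "q < n - 1" for q
  proof -
    let ?g = "witness_weight n" and ?L = "witness_lam n q"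
    have "?L\<^sup>2 \<noteq> 1" using witness_lam_sq_gt_one[OF q] by simp
    then have "h q = - (2 * (?g - ?L) / (?L\<^sup>2 - 1))"
      using q n by (simp add: h_def witness_H_entry witness_lam_def field_simps power2_eq_square)
    then show ?thesis
      using abs_two_diff_div_square_sub_one_le[OF witness_ratio_gt_one witness_lam_ge_ratio[OF q]
          witness_weight_bounds] by simp
  qed
qed

lemma witness_error_small:
  defines "e \<equiv> 2 / (witness_ratio n - 1)"
  shows "real (n - 1) * e\<^sup>2 + 2 * (2 * real n - 3) * real n * e < 1"
    and "real (n - 1) * e\<^sup>2 + 2 * (2 * real n - 3) * real (n - 1) * e < 2 * real n - 3"
proof -
  let ?x = "real n"
  have x: "3 \<le> ?x" "real (n - 1) = ?x - 1" using n by auto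
  have e_eq: "e = 1 / (8 * ?x\<^sup>2)" by (simp add: e_def witness_ratio_def)
  moreover have "9 \<le> ?x * ?x" using x mult_mono[of 3 ?x 3 ?x] by simp
  ultimately have e: "0 \<le> e" "e \<le> 1" by (simp_all add: power2_eq_square)
  have "?x ^ 1 \<le> ?x\<^sup>2" using x by (intro power_increasing) auto
  then have sq: "?x \<le> ?x\<^sup>2" by (simp only: power_one_right)
  have "real (n - 1) * e\<^sup>2 \<le> ?x\<^sup>2 * e\<^sup>2"
    by (intro mult_right_mono) (use x sq in linarith, simp)
  also have "\<dots> = e / 8" using x by (simp add: e_eq field_simps power2_eq_square)
  also have "\<dots> \<le> 1 / 8" using e by simp
  finally have err_sq: "real (n - 1) * e\<^sup>2 \<le> 1 / 8" .
  have "2 * (2 * ?x - 3) * ?x * e = (2 * ?x - 3) / (4 * ?x)"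
    using x by (simp add: e_eq field_simps power2_eq_square)
  also have "\<dots> < 1 / 2" using x by (simp add: field_simps)
  finally have err_lin: "2 * (2 * ?x - 3) * ?x * e < 1 / 2" .
  then show "real (n - 1) * e\<^sup>2 + 2 * (2 * ?x - 3) * ?x * e < 1" using err_sq by linarith
  have "2 * (2 * ?x - 3) * real (n - 1) * e \<le> 2 * (2 * ?x - 3) * ?x * e"
    using x e by (intro mult_right_mono mult_left_mono) auto
  then show "real (n - 1) * e\<^sup>2 + 2 * (2 * ?x - 3) * real (n - 1) * e < 2 * ?x - 3"
    using err_sq err_lin x by linarith
qed

lemma witness_form_neg:
  assumes p: "p < n"
  defines "h \<equiv> \<lambda>q. H_mat n (witness_lam n) (witness_gram n) $$ (p,q)"
  shows "(\<Sum>q<n. \<Sum>r<n. arrow_inv_mat (witness_weight n) n $$ (q,r) * h q * h r) < 0"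
proof -
  define m where "m = n - 1"
  let ?g = "witness_weight n" and ?c = "2 * real n - 3" and ?e = "2 / (witness_ratio n - 1)"
  have n_eq: "n = Suc m" using n by (simp add: m_def)
  have c: "?c > 0" "?c * ?g\<^sup>2 = 2" using n by (simp_all add: witness_weight_sq field_simps)
  have e: "0 \<le> ?e" using witness_ratio_gt_one by simp
  have "1 - real m * ?g\<^sup>2 = - 1 / ?c" using n c by (simp add: m_def witness_weight_sq field_simps)
  then have "(\<Sum>q<n. \<Sum>r<n. arrow_inv_mat ?g n $$ (q,r) * h q * h r)
      = (\<Sum>q<m. (h q)\<^sup>2) - ?c * (?g * (\<Sum>q<m. h q) - h m)\<^sup>2"
    using c arrow_inv_mat_quadratic_form[of ?g m h] unfolding n_eq[symmetric] by simp
  also have "\<dots> < 0"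
  proof (cases "p = m")
    case False
    then have pm: "p < m" using p n_eq by simp
    have row: "h p = 1" "\<And>q. q < m \<Longrightarrow> q \<noteq> p \<Longrightarrow> \<bar>h q\<bar> \<le> ?e" "\<bar>h m - 2 * ?g\<bar> \<le> ?e"
      using witness_H_inner_row[of p] pm unfolding h_def m_def by simp_all
    have small: "real m * ?e\<^sup>2 + 2 * ?c * real (Suc m) * ?e < 1"
      using witness_error_small(1) n_eq unfolding m_def by simp
    show ?thesis
      using arrow_form_neg_near_inner_row[OF pm row witness_weight_bounds c(2) e small] .
  next
    case True
    have row: "\<And>q. q < m \<Longrightarrow> \<bar>h q\<bar> \<le> ?e" "h m = 1"
      using witness_H_last_row unfolding h_def m_def True by simp_all
    have small: "real m * ?e\<^sup>2 + 2 * ?c * real m * ?e < ?c"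
      using witness_error_small(2) unfolding m_def .
    show ?thesis
      using arrow_form_neg_near_last_row[of m h, OF row witness_weight_bounds c(1) e small] .
  qed
  finally show ?thesis .
qed

end

theorem mainTheorem16:
  fixes n :: nat
  assumes "n \<ge> 3"
  shows "Theta n \<noteq> {}"
proof -
  let ?lam = "witness_lam n" and ?G = "witness_gram n" and ?Ginv = "arrow_inv_mat (witness_weight n) n"
  have "?Ginv \<in> carrier_mat n n" by (simp add: arrow_inv_mat_def)
  then have condition_ii: "\<exists>Ginv\<in>carrier_mat n n. ?G * Ginv = 1\<^sub>m n \<and> Ginv * ?G = 1\<^sub>m n \<and>
      (\<forall>p<n. (\<Sum>q<n. \<Sum>r<n. Ginv $$ (q,r) * H_mat n ?lam ?G $$ (p,q) * H_mat n ?lam ?G $$ (p,r)) < 0)"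
    using witness_gram_inverse[OF assms] witness_form_neg[OF assms] by (auto simp: mult.assoc)
  have lam: "\<forall>p<n. ?lam p \<noteq> 0"
    and lam_distinct: "\<forall>p<n. \<forall>q<n. p \<noteq> q \<longrightarrow> ?lam p \<noteq> ?lam q \<and> ?lam p \<noteq> - ?lam q"
    using witness_lam_pos[OF assms] witness_lam_distinct[OF assms] by (metis less_irrefl)+
  have gram: "?G \<in> carrier_mat n n" "?G\<^sup>T = ?G" "\<forall>p<n. ?G $$ (p,p) = 1"
    by (simp_all add: witness_gram_def) (simp add: arrow_mat_def)
  have "det ?G \<noteq> 0" using det_witness_gram[OF assms] assms by simp
  moreover have "\<forall>S. S \<subseteq> {0..<n} \<longrightarrow> 2 \<le> card S \<longrightarrow> card S \<le> n - 1 \<longrightarrow> det (submatrix ?G S S) > 0"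
    using witness_gram_minors_pos[OF assms] by blast
  ultimately have "in_Theta n ?lam ?G"
    unfolding in_Theta_def using lam lam_distinct gram witness_gram_inertia[OF assms] condition_ii
    by blast
  then show ?thesis by (auto simp: Theta_def)
qed

end
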